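(* Let $\tau$ be a signature and $\sigma$ a generalized dependency (GD) over $\tau$. Then $\sigma$ is preserved under globally-homomorphic preimages, i.e. for all $\tau$-structures $\mathcal{A},\mathcal{B}$, if $\mathcal{A}\Rightarrow\mathcal{B}$ and $\mathcal{B}\models\sigma$ then $\mathcal{A}\models\sigma$. In particular the same holds when $\mathcal{A},\mathcal{B}$ range only over finite structures.
   Context: Signatures are relational: a set of constant symbols and relation symbols with arities; structures have nonempty domains. Atomic formulas include equalities $t_1=t_2$ and relational atoms $R(\vec t)$. A GD is a sentence of the form $\forall\vec{x}(\phi(\vec{x})\rightarrow\exists\vec{y}(\psi_1(\vec{x},\vec{y})\vee\cdots\vee\psi_n(\vec{x},\vec{y})))$ with $n\ge 0$ and $\phi,\psi_1,\dots,\psi_n$ conjunctions of atomic formulas (for $n=0$ the head is $\bot$). For a structure $\mathcal{A}$ and $a_1,\dots,a_k\in A$, $(\mathcal{A},a_1,\dots,a_k)$ is the expansion interpreting fresh constant symbols $c_1,\dots,c_k$ as $a_1,\dots,a_k$. A homomorphism $\mathcal{A}\to\mathcal{B}$ is a map $h:A\to B$ preserving constants and relations ($h(R^{\mathcal A})\subseteq R^{\mathcal B}$); $\mathcal{A}\rightleftarrows\mathcal{B}$ means homomorphisms exist in both directions. $\mathcal{A}\Rightarrow\mathcal{B}$ ($\mathcal{A}$ is globally homomorphic to $\mathcal{B}$) means there is a function $\pi$ mapping every finite tuple $\vec a$ of elements of $A$ to a tuple $\pi(\vec a)$ of elements of $B$ of the same length with $(\mathcal{A},\vec{a})\rightleftarrows(\mathcal{B},\pi(\vec{a}))$.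 *)

theory Defs
  imports Main
begin

record ('c, 'r) signature =
  sig_consts :: "'c set"
  sig_rels   :: "'r set"
  sig_arity  :: "'r \<Rightarrow> nat"

record ('a, 'c, 'r) struct =
  dom   :: "'a set"
  cint  :: "'c \<Rightarrow> 'a"
  rint  :: "'r \<Rightarrow> 'a list set"

definition is_structure :: "('c, 'r) signature \<Rightarrow> ('a, 'c, 'r) struct \<Rightarrow> bool" where
  "is_structure \<tau> A \<longleftrightarrow>
     dom A \<noteq> {} \<and>
     (\<forall>c \<in> sig_consts \<tau>. cint A c \<in> dom A) \<and>
     (\<forall>R \<in> sig_rels \<tau>. \<forall>t \<in> rint A R. length t = sig_arity \<tau> R \<and> set t \<subseteq> dom A)"

definition is_hom :: "('c, 'r) signature \<Rightarrow> ('a, 'c, 'r) struct \<Rightarrow> ('b, 'c, 'r) struct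
                      \<Rightarrow> ('a \<Rightarrow> 'b) \<Rightarrow> bool" where
  "is_hom \<tau> A B h \<longleftrightarrow>
     (\<forall>a \<in> dom A. h a \<in> dom B) \<and>
     (\<forall>c \<in> sig_consts \<tau>. h (cint A c) = cint B c) \<and>
     (\<forall>R \<in> sig_rels \<tau>. \<forall>t \<in> rint A R. map h t \<in> rint B R)"

definition hom_exists :: "('c, 'r) signature \<Rightarrow> ('a, 'c, 'r) struct \<Rightarrow> ('b, 'c, 'r) struct \<Rightarrow> bool" where
  "hom_exists \<tau> A B \<longleftrightarrow> (\<exists>h. is_hom \<tau> A B h)"

definition hom_equiv :: "('c, 'r) signature \<Rightarrow> ('a, 'c, 'r) struct \<Rightarrow> ('b, 'c, 'r) struct \<Rightarrow> bool" where
  "hom_equiv \<tau> A B \<longleftrightarrow> hom_exists \<tau> A B \<and> hom_exists \<tau> B A"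

text \<open>The fresh constants c_1, ..., c_k are represented as Inr 0, ..., Inr (k-1);
  the original constants of the signature as Inl c.\<close>

definition expand_sig :: "('c, 'r) signature \<Rightarrow> nat \<Rightarrow> ('c + nat, 'r) signature" where
  "expand_sig \<tau> k = \<lparr> sig_consts = Inl ` sig_consts \<tau> \<union> Inr ` {..<k},
                      sig_rels = sig_rels \<tau>, sig_arity = sig_arity \<tau> \<rparr>"

definition expand :: "('a, 'c, 'r) struct \<Rightarrow> 'a list \<Rightarrow> ('a, 'c + nat, 'r) struct" where
  "expand A as = \<lparr> dom = dom A,
                   cint = (\<lambda>x. case x of Inl c \<Rightarrow> cint A c | Inr i \<Rightarrow> as ! i),
                   rint = rint A \<rparr>"

definition glob_hom :: "('c, 'r) signature \<Rightarrow> ('a, 'c, 'r) struct \<Rightarrow> ('b, 'c, 'r) struct \<Rightarrow> bool" where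
  "glob_hom \<tau> A B \<longleftrightarrow>
     (\<exists>\<pi> :: 'a list \<Rightarrow> 'b list. \<forall>as. set as \<subseteq> dom A \<longrightarrow>
        length (\<pi> as) = length as \<and> set (\<pi> as) \<subseteq> dom B \<and>
        hom_equiv (expand_sig \<tau> (length as)) (expand A as) (expand B (\<pi> as)))"

datatype 'c trm = Var nat | Cst 'c

datatype ('c, 'r) atom = Eq "'c trm" "'c trm" | Rel 'r "'c trm list"

fun trm_vars :: "'c trm \<Rightarrow> nat set" where
  "trm_vars (Var x) = {x}"
| "trm_vars (Cst c) = {}"

fun atom_vars :: "('c, 'r) atom \<Rightarrow> nat set" where
  "atom_vars (Eq s t) = trm_vars s \<union> trm_vars t"
| "atom_vars (Rel R ts) = \<Union> (trm_vars ` set ts)"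

fun trm_consts :: "'c trm \<Rightarrow> 'c set" where
  "trm_consts (Var x) = {}"
| "trm_consts (Cst c) = {c}"

fun atom_wf :: "('c, 'r) signature \<Rightarrow> ('c, 'r) atom \<Rightarrow> bool" where
  "atom_wf \<tau> (Eq s t) \<longleftrightarrow> trm_consts s \<union> trm_consts t \<subseteq> sig_consts \<tau>"
| "atom_wf \<tau> (Rel R ts) \<longleftrightarrow> R \<in> sig_rels \<tau> \<and> length ts = sig_arity \<tau> R \<and>
                             (\<Union> (trm_consts ` set ts)) \<subseteq> sig_consts \<tau>"

text \<open>A GD  \<forall>xs (body \<longrightarrow> \<exists>ys (head_1 \<or> ... \<or> head_n)), where body and each head_i
  are conjunctions (lists) of atoms; n = 0 (heads = []) means the head is \<bottom>.\<close>

record ('c, 'r) gd =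
  gd_univ  :: "nat list"
  gd_exist :: "nat list"
  gd_body  :: "('c, 'r) atom list"
  gd_heads :: "('c, 'r) atom list list"

definition gd_wf :: "('c, 'r) signature \<Rightarrow> ('c, 'r) gd \<Rightarrow> bool" where
  "gd_wf \<tau> \<sigma> \<longleftrightarrow>
     distinct (gd_univ \<sigma> @ gd_exist \<sigma>) \<and>
     (\<forall>a \<in> set (gd_body \<sigma>). atom_wf \<tau> a \<and> atom_vars a \<subseteq> set (gd_univ \<sigma>)) \<and>
     (\<forall>\<psi> \<in> set (gd_heads \<sigma>). \<forall>a \<in> set \<psi>.
        atom_wf \<tau> a \<and> atom_vars a \<subseteq> set (gd_univ \<sigma>) \<union> set (gd_exist \<sigma>))"

fun trm_eval :: "('a, 'c, 'r) struct \<Rightarrow> (nat \<Rightarrow> 'a) \<Rightarrow> 'c trm \<Rightarrow> 'a" where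
  "trm_eval A v (Var x) = v x"
| "trm_eval A v (Cst c) = cint A c"

fun atom_holds :: "('a, 'c, 'r) struct \<Rightarrow> (nat \<Rightarrow> 'a) \<Rightarrow> ('c, 'r) atom \<Rightarrow> bool" where
  "atom_holds A v (Eq s t) \<longleftrightarrow> trm_eval A v s = trm_eval A v t"
| "atom_holds A v (Rel R ts) \<longleftrightarrow> map (trm_eval A v) ts \<in> rint A R"

definition conj_holds :: "('a, 'c, 'r) struct \<Rightarrow> (nat \<Rightarrow> 'a) \<Rightarrow> ('c, 'r) atom list \<Rightarrow> bool" where
  "conj_holds A v \<phi> \<longleftrightarrow> (\<forall>a \<in> set \<phi>. atom_holds A v a)"

definition gd_sat :: "('a, 'c, 'r) struct \<Rightarrow> ('c, 'r) gd \<Rightarrow> bool" where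
  "gd_sat A \<sigma> \<longleftrightarrow>
     (\<forall>v. (\<forall>x \<in> set (gd_univ \<sigma>). v x \<in> dom A) \<longrightarrow> conj_holds A v (gd_body \<sigma>) \<longrightarrow>
        (\<exists>w. (\<forall>y \<in> set (gd_exist \<sigma>). w y \<in> dom A) \<and>
             (\<forall>x. x \<notin> set (gd_exist \<sigma>) \<longrightarrow> w x = v x) \<and>
             (\<exists>\<psi> \<in> set (gd_heads \<sigma>). conj_holds A w \<psi>)))"

end

theory Submission
  imports Defs
begin

text \<open>Given values in \<open>\<A>\<close> for the universal variables that satisfy the body, the
  global homomorphism yields homomorphisms \<open>h : \<A> \<rightarrow> \<B>\<close> and \<open>g : \<B> \<rightarrow> \<A>\<close> with \<open>g \<circ> h\<close>
  fixing these values. Conjunctions of atoms are preserved by homomorphisms, so \<open>h\<close>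
  carries the body to \<open>\<B>\<close>; there \<open>\<sigma>\<close> supplies witnesses for some disjunct of the head,
  and \<open>g\<close> carries these back to \<open>\<A>\<close> without moving the universal values.\<close>

lemma trm_eval_hom:
  assumes "is_hom \<tau> A B h"
    and "trm_consts t \<subseteq> sig_consts \<tau>"
    and "\<forall>x\<in>trm_vars t. h (v x) = v' x"
  shows "h (trm_eval A v t) = trm_eval B v' t"
  using assms by (cases t) (auto simp: is_hom_def)

lemma atom_holds_hom:
  assumes hom: "is_hom \<tau> A B h"
    and "atom_wf \<tau> a"
    and "\<forall>x\<in>atom_vars a. h (v x) = v' x"
    and "atom_holds A v a"
  shows "atom_holds B v' a"
proof (cases a)
  case (Eq s t)
  then show ?thesis
    using assms trm_eval_hom[OF hom, of s v v'] trm_eval_hom[OF hom, of t v v'] by auto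
next
  case (Rel R ts)
  have "map (trm_eval B v') ts = map h (map (trm_eval A v) ts)"
    using assms Rel by (auto intro!: trm_eval_hom[symmetric])
  also have "\<dots> \<in> rint B R"
    using assms Rel unfolding is_hom_def by (simp del: map_map)
  finally show ?thesis
    using Rel by simp
qed

lemma conj_holds_hom:
  assumes "is_hom \<tau> A B h"
    and "\<forall>a\<in>set \<phi>. atom_wf \<tau> a"
    and "\<forall>a\<in>set \<phi>. \<forall>x\<in>atom_vars a. h (v x) = v' x"
    and "conj_holds A v \<phi>"
  shows "conj_holds B v' \<phi>"
  using assms atom_holds_hom unfolding conj_holds_def by metis

lemma is_hom_expand_iff:
  "is_hom (expand_sig \<tau> (length as)) (expand A as) (expand B bs) h \<longleftrightarrow>
     is_hom \<tau> A B h \<and> (\<forall>i<length as. h (as ! i) = bs ! i)"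
  unfolding is_hom_def expand_sig_def expand_def by (auto simp: ball_Un Ball_image_comp)

lemma glob_hom_retraction:
  assumes "glob_hom \<tau> A B"
    and "set as \<subseteq> dom A"
  obtains h g where "is_hom \<tau> A B h" and "is_hom \<tau> B A g" and "\<forall>a\<in>set as. g (h a) = a"
proof -
  obtain bs where len: "length bs = length as"
    and equiv: "hom_equiv (expand_sig \<tau> (length as)) (expand A as) (expand B bs)"
    using assms unfolding glob_hom_def by blast
  obtain h g
    where h: "is_hom (expand_sig \<tau> (length as)) (expand A as) (expand B bs) h"
      and g: "is_hom (expand_sig \<tau> (length bs)) (expand B bs) (expand A as) g"
    using equiv len unfolding hom_equiv_def hom_exists_def by metis
  have "g (h (as ! i)) = as ! i" if "i < length as" for i
    using that len h g unfolding is_hom_expand_iff by simp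
  then have "\<forall>a\<in>set as. g (h a) = a"
    by (metis in_set_conv_nth)
  with h g show thesis
    using that unfolding is_hom_expand_iff by blast
qed

lemma gd_sat_transfer:
  assumes wf: "gd_wf \<tau> \<sigma>"
    and retraction: "\<And>v. \<forall>x\<in>set (gd_univ \<sigma>). v x \<in> dom A \<Longrightarrow>
      \<exists>h g. is_hom \<tau> A B h \<and> is_hom \<tau> B A g \<and> (\<forall>x\<in>set (gd_univ \<sigma>). g (h (v x)) = v x)"
    and sat: "gd_sat B \<sigma>"
  shows "gd_sat A \<sigma>"
  unfolding gd_sat_def
proof (intro allI impI)
  fix v
  assume v: "\<forall>x\<in>set (gd_univ \<sigma>). v x \<in> dom A"
    and body: "conj_holds A v (gd_body \<sigma>)"
  obtain h g where h: "is_hom \<tau> A B h" and g: "is_hom \<tau> B A g"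
    and gh: "\<forall>x\<in>set (gd_univ \<sigma>). g (h (v x)) = v x"
    using retraction[OF v] by blast
  have body_wf: "\<forall>a\<in>set (gd_body \<sigma>). atom_wf \<tau> a \<and> atom_vars a \<subseteq> set (gd_univ \<sigma>)"
    and head_wf: "\<forall>\<psi>\<in>set (gd_heads \<sigma>). \<forall>a\<in>set \<psi>.
      atom_wf \<tau> a \<and> atom_vars a \<subseteq> set (gd_univ \<sigma>) \<union> set (gd_exist \<sigma>)"
    using wf unfolding gd_wf_def by auto
  have "conj_holds B (h \<circ> v) (gd_body \<sigma>)"
    using conj_holds_hom[OF h _ _ body] body_wf by auto
  moreover have "\<forall>x\<in>set (gd_univ \<sigma>). (h \<circ> v) x \<in> dom B"
    using v h unfolding is_hom_def by simp
  ultimately obtain w where w: "\<forall>y\<in>set (gd_exist \<sigma>). w y \<in> dom B"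
    and w_univ: "\<forall>x. x \<notin> set (gd_exist \<sigma>) \<longrightarrow> w x = (h \<circ> v) x"
    and "\<exists>\<psi>\<in>set (gd_heads \<sigma>). conj_holds B w \<psi>"
    using sat unfolding gd_sat_def by blast
  then obtain \<psi> where \<psi>: "\<psi> \<in> set (gd_heads \<sigma>)" "conj_holds B w \<psi>"
    by blast
  define w' where "w' x = (if x \<in> set (gd_exist \<sigma>) then g (w x) else v x)" for x
  have "g (w x) = w' x" if "x \<in> set (gd_univ \<sigma>) \<union> set (gd_exist \<sigma>)" for x
    using that w_univ gh unfolding w'_def by auto
  then have "conj_holds A w' \<psi>"
    using conj_holds_hom[OF g _ _ \<psi>(2)] head_wf \<psi>(1) by blast
  moreover have "\<forall>y\<in>set (gd_exist \<sigma>). w' y \<in> dom A"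
    using w g unfolding w'_def is_hom_def by simp
  moreover have "\<forall>x. x \<notin> set (gd_exist \<sigma>) \<longrightarrow> w' x = v x"
    unfolding w'_def by simp
  ultimately show "\<exists>w. (\<forall>y\<in>set (gd_exist \<sigma>). w y \<in> dom A) \<and>
      (\<forall>x. x \<notin> set (gd_exist \<sigma>) \<longrightarrow> w x = v x) \<and> (\<exists>\<psi>\<in>set (gd_heads \<sigma>). conj_holds A w \<psi>)"
    using \<psi>(1) by blast
qed

theorem proposition1:
  fixes \<tau> :: "('c, 'r) signature"
    and \<sigma> :: "('c, 'r) gd"
    and A :: "('a, 'c, 'r) struct"
    and B :: "('b, 'c, 'r) struct"
  assumes "gd_wf \<tau> \<sigma>"
    and "is_structure \<tau> A"
    and "is_structure \<tau> B"
    and "glob_hom \<tau> A B"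
    and "gd_sat B \<sigma>"
  shows "gd_sat A \<sigma>"
proof (rule gd_sat_transfer[OF \<open>gd_wf \<tau> \<sigma>\<close> _ \<open>gd_sat B \<sigma>\<close>])
  fix v
  assume "\<forall>x\<in>set (gd_univ \<sigma>). v x \<in> dom A"
  then have "set (map v (gd_univ \<sigma>)) \<subseteq> dom A"
    by auto
  then show "\<exists>h g. is_hom \<tau> A B h \<and> is_hom \<tau> B A g \<and> (\<forall>x\<in>set (gd_univ \<sigma>). g (h (v x)) = v x)"
    by (rule glob_hom_retraction[OF \<open>glob_hom \<tau> A B\<close>]) auto
qed

end
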